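(* Let $(\Sigma_+,\Sigma_-,N_1,N_2,N_3)$ be a solution of the Wainwright–Hsu system satisfying the constraint, with $N_1=0$, $N_2,N_3>0$, such that $N_2=N_3$ and $\Sigma_-=0$ never hold simultaneously. Then $\lim_{\tau\to\infty}\Sigma_+=-1$, $\lim_{\tau\to\infty}\Sigma_-=0$ and $\lim_{\tau\to\infty}(N_2-N_3)=0$.
   Context: Wainwright–Hsu system: for functions $N_1,N_2,N_3,\Sigma_+,\Sigma_-$ of $\tau\in\mathbb{R}$ (prime denotes $d/d\tau$), $N_1'=(q-4\Sigma_+)N_1$, $N_2'=(q+2\Sigma_++2\sqrt3\Sigma_-)N_2$, $N_3'=(q+2\Sigma_+-2\sqrt3\Sigma_-)N_3$, $\Sigma_+'=-(2-q)\Sigma_+-3S_+$, $\Sigma_-'=-(2-q)\Sigma_--3S_-$, where $q=2(\Sigma_+^2+\Sigma_-^2)$, $S_+=\frac12[(N_2-N_3)^2-N_1(2N_1-N_2-N_3)]$, $S_-=\frac{\sqrt3}{2}(N_3-N_2)(N_1-N_2-N_3)$, together with the constraint $\Sigma_+^2+\Sigma_-^2+\frac34[N_1^2+N_2^2+N_3^2-2(N_1N_2+N_2N_3+N_1N_3)]=1$. Solutions exist for all $\tau\in\mathbb{R}$. *)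

theory Defs
  imports "HOL-Analysis.Analysis"
begin

definition wh_q :: "real \<Rightarrow> real \<Rightarrow> real" where
  "wh_q sp sm = 2 * (sp^2 + sm^2)"

definition wh_Splus :: "real \<Rightarrow> real \<Rightarrow> real \<Rightarrow> real" where
  "wh_Splus n1 n2 n3 = (1/2) * ((n2 - n3)^2 - n1 * (2*n1 - n2 - n3))"

definition wh_Sminus :: "real \<Rightarrow> real \<Rightarrow> real \<Rightarrow> real" where
  "wh_Sminus n1 n2 n3 = (sqrt 3 / 2) * (n3 - n2) * (n1 - n2 - n3)"

definition wh_solution ::
  "(real \<Rightarrow> real) \<Rightarrow> (real \<Rightarrow> real) \<Rightarrow> (real \<Rightarrow> real) \<Rightarrow> (real \<Rightarrow> real) \<Rightarrow> (real \<Rightarrow> real) \<Rightarrow> bool"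
where
  "wh_solution N1 N2 N3 Sp Sm \<longleftrightarrow>
    (\<forall>t. (N1 has_real_derivative ((wh_q (Sp t) (Sm t) - 4 * Sp t) * N1 t)) (at t)
       \<and> (N2 has_real_derivative ((wh_q (Sp t) (Sm t) + 2 * Sp t + 2 * sqrt 3 * Sm t) * N2 t)) (at t)
       \<and> (N3 has_real_derivative ((wh_q (Sp t) (Sm t) + 2 * Sp t - 2 * sqrt 3 * Sm t) * N3 t)) (at t)
       \<and> (Sp has_real_derivative (- (2 - wh_q (Sp t) (Sm t)) * Sp t - 3 * wh_Splus (N1 t) (N2 t) (N3 t))) (at t)
       \<and> (Sm has_real_derivative (- (2 - wh_q (Sp t) (Sm t)) * Sm t - 3 * wh_Sminus (N1 t) (N2 t) (N3 t))) (at t)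
       \<and> (Sp t)^2 + (Sm t)^2 + (3/4) * ((N1 t)^2 + (N2 t)^2 + (N3 t)^2
            - 2 * (N1 t * N2 t + N2 t * N3 t + N1 t * N3 t)) = 1)"

end

theory Submission
  imports Defs
begin

(* With N1 = 0 the constraint becomes Sp^2 + Sm^2 + 3/4 (N2 - N3)^2 = 1 and
   Sp' = -3/2 (N2 - N3)^2 (1 + Sp), so Sp decreases inside (-1, 1); once 1 + Sp -> 0,
   the constraint forces Sm -> 0 and N2 - N3 -> 0.  Suppose instead 1 + Sp >= a > 0 forever.
   Then P = N2 N3 / (1 + Sp)^2 satisfies (ln P)' = 4 (1 + Sp) >= 4 a, so N2 N3 grows
   exponentially and the ratio r = (N2 - N3) / (N2 + N3) tends to 0.  The function
   H = sqrt 3 / 2 Sm r - 3 / a (1 + Sp) is bounded, but H' >= 3 (1 - Sp^2) - 5 |r|, which is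
   eventually bounded below by a positive constant: a contradiction. *)

lemma DERIV_ge_imp_linear_lower_bound:
  fixes f f' :: "real \<Rightarrow> real"
  assumes deriv: "\<And>u. (f has_real_derivative f' u) (at u)"
    and ge: "\<And>u. T \<le> u \<Longrightarrow> u \<le> t \<Longrightarrow> c \<le> f' u" and "T \<le> t"
  shows "f T + c * (t - T) \<le> f t"
proof (cases "T = t")
  case False
  with \<open>T \<le> t\<close> have "T < t" by simp
  with MVT2[of T t f f'] deriv obtain z where z: "T < z" "z < t" "f t - f T = (t - T) * f' z"
    by blast
  have "c * (t - T) \<le> f' z * (t - T)"
    using ge[of z] z \<open>T < t\<close> by (intro mult_right_mono) auto
  then show ?thesis using z(3) by (simp add: mult.commute)
qed simp

lemma DERIV_eventually_ge_imp_filterlim_at_top: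
  fixes f f' :: "real \<Rightarrow> real"
  assumes deriv: "\<And>t. (f has_real_derivative f' t) (at t)"
    and "\<forall>\<^sub>F t in at_top. c \<le> f' t" and "0 < c"
  shows "filterlim f at_top at_top"
proof -
  obtain T where T: "\<And>t. T \<le> t \<Longrightarrow> c \<le> f' t"
    using assms(2) by (auto simp: eventually_at_top_linorder)
  have "Z \<le> f t" if "max T (T + (Z - f T) / c) \<le> t" for Z t
  proof -
    have "f T + c * (t - T) \<le> f t"
      using that by (intro DERIV_ge_imp_linear_lower_bound[OF deriv T]) auto
    moreover have "Z \<le> f T + c * (t - T)"
      using that \<open>0 < c\<close> by (simp add: field_simps)
    ultimately show ?thesis by linarith
  qed
  then show ?thesis unfolding filterlim_at_top eventually_at_top_linorder by blast
qed

lemma tendsto_zero_if_power2_le: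
  fixes f g :: "'a \<Rightarrow> real"
  assumes "(g \<longlongrightarrow> 0) F" and "eventually (\<lambda>x. f x ^ 2 \<le> g x) F"
  shows "(f \<longlongrightarrow> 0) F"
proof (rule tendsto_0_le[where K = 1])
  show "((\<lambda>x. sqrt (g x)) \<longlongrightarrow> 0) F"
    using tendsto_real_sqrt[OF assms(1)] by simp
  show "eventually (\<lambda>x. norm (f x) \<le> norm (sqrt (g x)) * 1) F"
    using assms(2)
  proof eventually_elim
    case (elim x)
    then have "\<bar>f x\<bar> \<le> sqrt (g x)" by (intro real_le_rsqrt) simp
    then show ?case by simp
  qed
qed

lemma DERIV_ln_of_DERIV_eq_mult:
  fixes f :: "real \<Rightarrow> real"
  assumes "(f has_real_derivative c * f t) (at t)" and "0 < f t"
  shows "((\<lambda>u. ln (f u)) has_real_derivative c) (at t)"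
  using DERIV_chain2[OF DERIV_ln_divide[OF assms(2)] assms(1)] assms(2) by simp

locale wh_type_VII0 =
  fixes N2 N3 Sp Sm :: "real \<Rightarrow> real"
  assumes solution: "wh_solution (\<lambda>_. 0) N2 N3 Sp Sm"
    and N2_pos: "N2 t > 0" and N3_pos: "N3 t > 0"
    and not_LRS: "\<not> (N2 t = N3 t \<and> Sm t = 0)"
begin

lemma constraint: "Sp t ^ 2 + Sm t ^ 2 + 3/4 * (N2 t - N3 t) ^ 2 = 1"
  using solution by (simp add: wh_solution_def power2_eq_square algebra_simps)

lemma q_eq: "wh_q (Sp t) (Sm t) = 2 - 3/2 * (N2 t - N3 t) ^ 2"
  using constraint[of t] by (simp add: wh_q_def)

lemma N2_deriv:
  "(N2 has_real_derivative
      (2 - 3/2 * (N2 t - N3 t) ^ 2 + 2 * Sp t + 2 * sqrt 3 * Sm t) * N2 t) (at t)"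
  using solution by (simp add: wh_solution_def q_eq)

lemma N3_deriv:
  "(N3 has_real_derivative
      (2 - 3/2 * (N2 t - N3 t) ^ 2 + 2 * Sp t - 2 * sqrt 3 * Sm t) * N3 t) (at t)"
  using solution by (simp add: wh_solution_def q_eq)

lemma Sp_deriv: "(Sp has_real_derivative - 3/2 * (N2 t - N3 t) ^ 2 * (1 + Sp t)) (at t)"
proof -
  have "- (2 - wh_q (Sp t) (Sm t)) * Sp t - 3 * wh_Splus 0 (N2 t) (N3 t)
      = - 3/2 * (N2 t - N3 t) ^ 2 * (1 + Sp t)"
    by (simp add: q_eq wh_Splus_def algebra_simps)
  moreover have "(Sp has_real_derivative
      - (2 - wh_q (Sp t) (Sm t)) * Sp t - 3 * wh_Splus 0 (N2 t) (N3 t)) (at t)"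
    using solution unfolding wh_solution_def by blast
  ultimately show ?thesis by simp
qed

lemma Sm_deriv:
  "(Sm has_real_derivative - 3/2 * (N2 t - N3 t) ^ 2 * Sm t
      - 3/2 * sqrt 3 * (N2 t - N3 t) * (N2 t + N3 t)) (at t)"
proof -
  have "- (2 - wh_q (Sp t) (Sm t)) * Sm t - 3 * wh_Sminus 0 (N2 t) (N3 t)
      = - 3/2 * (N2 t - N3 t) ^ 2 * Sm t - 3/2 * sqrt 3 * (N2 t - N3 t) * (N2 t + N3 t)"
    by (simp add: q_eq wh_Sminus_def algebra_simps)
  moreover have "(Sm has_real_derivative
      - (2 - wh_q (Sp t) (Sm t)) * Sm t - 3 * wh_Sminus 0 (N2 t) (N3 t)) (at t)"
    using solution unfolding wh_solution_def by blast
  ultimately show ?thesis by simp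
qed

lemma Sp_abs_less_1: "\<bar>Sp t\<bar> < 1"
proof -
  have "0 < Sm t ^ 2 + 3/4 * (N2 t - N3 t) ^ 2"
    using not_LRS[of t] by (cases "Sm t = 0") (auto intro: add_pos_nonneg add_nonneg_pos)
  then have "Sp t ^ 2 < 1" using constraint[of t] by linarith
  then show ?thesis by (simp add: abs_square_less_1)
qed

lemma Sm_square_le: "Sm t ^ 2 \<le> 1 - Sp t ^ 2"
  using constraint[of t] zero_le_power2[of "N2 t - N3 t"] by linarith

lemma Sm_abs_le_1: "\<bar>Sm t\<bar> \<le> 1"
proof -
  have "Sm t ^ 2 \<le> 1" using Sm_square_le[of t] zero_le_power2[of "Sp t"] by linarith
  then show ?thesis by (simp add: abs_square_le_1)
qed

lemma N_diff_square_le: "3/4 * (N2 t - N3 t) ^ 2 \<le> 1 - Sp t ^ 2"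
  using constraint[of t] zero_le_power2[of "Sm t"] by linarith

lemma N_diff_square_le_4_3: "(N2 t - N3 t) ^ 2 \<le> 4/3"
  using N_diff_square_le[of t] zero_le_power2[of "Sp t"] by linarith

lemma Sp_antimono:
  assumes "s \<le> t" shows "Sp t \<le> Sp s"
proof -
  have "- Sp s + 0 * (t - s) \<le> - Sp t"
  proof (rule DERIV_ge_imp_linear_lower_bound[OF _ _ assms])
    show "((\<lambda>t. - Sp t) has_real_derivative 3/2 * (N2 u - N3 u) ^ 2 * (1 + Sp u)) (at u)" for u
      using DERIV_minus[OF Sp_deriv[of u]] by simp
    show "0 \<le> 3/2 * (N2 u - N3 u) ^ 2 * (1 + Sp u)" for u
      using Sp_abs_less_1[of u] by simp
  qed
  then show ?thesis by simp
qed

(* The terms -3 (N2 - N3)^2 in (ln (N2 N3))' and (ln ((1 + Sp)^2))' cancel. *)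
definition P :: "real \<Rightarrow> real" where
  "P t = N2 t * N3 t / (1 + Sp t) ^ 2"

lemma P_pos: "0 < P t"
  using N2_pos[of t] N3_pos[of t] Sp_abs_less_1[of t] by (simp add: P_def abs_less_iff)

lemma ln_P_deriv: "((\<lambda>t. ln (P t)) has_real_derivative 4 * (1 + Sp t)) (at t)"
proof -
  have "ln (P u) = ln (N2 u) + ln (N3 u) - 2 * ln (1 + Sp u)" for u
    using N2_pos[of u] N3_pos[of u] Sp_abs_less_1[of u]
    by (simp add: P_def ln_div ln_mult ln_realpow abs_less_iff)
  moreover have "((\<lambda>u. ln (N2 u) + ln (N3 u) - 2 * ln (1 + Sp u))
      has_real_derivative 4 * (1 + Sp t)) (at t)"
  proof -
    have "((\<lambda>u. 1 + Sp u) has_real_derivative - 3/2 * (N2 t - N3 t) ^ 2 * (1 + Sp t)) (at t)"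
      using DERIV_add[OF DERIV_const Sp_deriv] by simp
    from DERIV_diff[OF DERIV_add[OF DERIV_ln_of_DERIV_eq_mult[OF N2_deriv N2_pos]
          DERIV_ln_of_DERIV_eq_mult[OF N3_deriv N3_pos]]
        DERIV_cmult[where c = 2, OF DERIV_ln_of_DERIV_eq_mult[OF this]]]
    show ?thesis using Sp_abs_less_1[of t] by (simp add: abs_less_iff algebra_simps)
  qed
  ultimately show ?thesis by simp
qed

lemma P_growth:
  assumes "0 \<le> t" shows "P 0 * exp (4 * (1 + Sp t) * t) \<le> P t"
proof -
  have "ln (P 0) + 4 * (1 + Sp t) * (t - 0) \<le> ln (P t)"
    using Sp_antimono by (intro DERIV_ge_imp_linear_lower_bound[OF ln_P_deriv _ assms]) auto
  then have "exp (ln (P 0) + 4 * (1 + Sp t) * t) \<le> P t"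
    using P_pos[of t] by (metis diff_zero exp_le_cancel_iff exp_ln)
  then show ?thesis using P_pos[of 0] by (simp add: exp_add)
qed

definition ratio :: "real \<Rightarrow> real" where
  "ratio t = (N2 t - N3 t) / (N2 t + N3 t)"

lemma ratio_abs_le_1: "\<bar>ratio t\<bar> \<le> 1"
  using N2_pos[of t] N3_pos[of t] by (simp add: ratio_def abs_le_iff divide_le_eq)

lemma ratio_square_le: "ratio t ^ 2 \<le> 1 / (3 * (N2 t * N3 t))"
proof -
  have pos: "0 < N2 t * N3 t" using N2_pos[of t] N3_pos[of t] by simp
  have "3 * (N2 t * N3 t) * (N2 t - N3 t) ^ 2 \<le> 3 * (N2 t * N3 t) * (4/3)"
    using pos N_diff_square_le_4_3[of t] by (intro mult_left_mono) auto
  also have "\<dots> \<le> (N2 t + N3 t) ^ 2"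
    using zero_le_power2[of "N2 t - N3 t"] by (simp add: power2_eq_square algebra_simps)
  finally show ?thesis
    using pos N2_pos[of t] N3_pos[of t]
    by (simp add: ratio_def power_divide divide_le_eq le_divide_eq mult.commute)
qed

lemma ratio_square_decay:
  assumes "0 \<le> t"
  shows "ratio t ^ 2 \<le> 1 / (3 * P 0 * ((1 + Sp t) ^ 2 * exp (4 * (1 + Sp t) * t)))"
proof -
  have "P 0 * ((1 + Sp t) ^ 2 * exp (4 * (1 + Sp t) * t))
      = (1 + Sp t) ^ 2 * (P 0 * exp (4 * (1 + Sp t) * t))"
    by (rule mult.left_commute)
  also have "\<dots> \<le> (1 + Sp t) ^ 2 * P t"
    by (rule mult_left_mono[OF P_growth[OF assms]]) simp
  also have "\<dots> = N2 t * N3 t"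
    using Sp_abs_less_1[of t] by (simp add: P_def abs_less_iff)
  finally have "3 * P 0 * ((1 + Sp t) ^ 2 * exp (4 * (1 + Sp t) * t)) \<le> 3 * (N2 t * N3 t)"
    by simp
  moreover have "0 < 3 * P 0 * ((1 + Sp t) ^ 2 * exp (4 * (1 + Sp t) * t))"
    using P_pos[of 0] Sp_abs_less_1[of t] by (simp add: abs_less_iff)
  ultimately have "1 / (3 * (N2 t * N3 t))
      \<le> 1 / (3 * P 0 * ((1 + Sp t) ^ 2 * exp (4 * (1 + Sp t) * t)))"
    by (intro frac_le) auto
  with ratio_square_le[of t] show ?thesis by linarith
qed

lemma ratio_deriv: "(ratio has_real_derivative 2 * sqrt 3 * Sm t * (1 - ratio t ^ 2)) (at t)"
proof -
  define g where "g = 2 - 3/2 * (N2 t - N3 t) ^ 2 + 2 * Sp t"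
  define x N where "x = N2 t - N3 t" and "N = N2 t + N3 t"
  have N_pos: "0 < N" using N2_pos[of t] N3_pos[of t] by (simp add: N_def)
  have dx: "((\<lambda>u. N2 u - N3 u) has_real_derivative g * x + 2 * sqrt 3 * Sm t * N) (at t)"
    by (rule DERIV_cong[OF DERIV_diff[OF N2_deriv[of t] N3_deriv[of t]]])
      (simp add: g_def x_def N_def field_simps)
  have dN: "((\<lambda>u. N2 u + N3 u) has_real_derivative g * N + 2 * sqrt 3 * Sm t * x) (at t)"
    by (rule DERIV_cong[OF DERIV_add[OF N2_deriv[of t] N3_deriv[of t]]])
      (simp add: g_def x_def N_def field_simps)
  have "(ratio has_real_derivative
      ((g * x + 2 * sqrt 3 * Sm t * N) * N - x * (g * N + 2 * sqrt 3 * Sm t * x)) / (N * N)) (at t)"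
    using DERIV_divide[OF dx dN] N_pos by (simp add: ratio_def[abs_def] N_def x_def)
  moreover have "((g * x + 2 * sqrt 3 * Sm t * N) * N - x * (g * N + 2 * sqrt 3 * Sm t * x)) / (N * N)
      = 2 * sqrt 3 * Sm t * ((N ^ 2 - x ^ 2) / (N * N))"
    by (simp add: algebra_simps power2_eq_square)
  moreover have "(N ^ 2 - x ^ 2) / (N * N) = 1 - ratio t ^ 2"
    using N_pos by (simp add: ratio_def x_def[symmetric] N_def[symmetric] diff_divide_distrib
        power_divide power2_eq_square)
  ultimately show ?thesis by simp
qed

definition H :: "real \<Rightarrow> real \<Rightarrow> real" where
  "H a t = sqrt 3 / 2 * (Sm t * ratio t) - 3 / a * (1 + Sp t)"

definition H' :: "real \<Rightarrow> real \<Rightarrow> real" where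
  "H' a t = 3 * Sm t ^ 2 * (1 - ratio t ^ 2) - 9/4 * (N2 t - N3 t) ^ 2
      - 3/4 * sqrt 3 * (N2 t - N3 t) ^ 2 * Sm t * ratio t
      + 9 / (2 * a) * (N2 t - N3 t) ^ 2 * (1 + Sp t)"

lemma H_deriv: "(H a has_real_derivative H' a t) (at t)"
proof -
  have "(N2 t - N3 t) * (N2 t + N3 t) * ratio t = (N2 t - N3 t) ^ 2"
    using N2_pos[of t] N3_pos[of t] by (simp add: ratio_def power2_eq_square)
  moreover have "sqrt 3 * sqrt 3 = 3" by simp
  moreover have "9 / (2 * a) = 3/2 * (3 / a)" by simp
  ultimately show ?thesis
    unfolding H_def[abs_def] H'_def
    by - (rule DERIV_cong[OF DERIV_diff[OF DERIV_cmult[OF DERIV_mult[OF Sm_deriv ratio_deriv]]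
          DERIV_cmult[OF DERIV_add[OF DERIV_const Sp_deriv]]]], algebra)
qed

lemma H_deriv_ge:
  assumes "0 < a" and "a \<le> 1 + Sp t"
  shows "3 * (1 - Sp t ^ 2) - 5 * \<bar>ratio t\<bar> \<le> H' a t"
proof -
  define x r where "x = N2 t - N3 t" and "r = ratio t"
  have r: "\<bar>r\<bar> \<le> 1" using ratio_abs_le_1 by (simp add: r_def)
  have Sm: "Sm t ^ 2 \<le> 1" "\<bar>Sm t\<bar> \<le> 1"
    using Sm_abs_le_1[of t] by (auto simp: abs_square_le_1)
  have x: "x ^ 2 \<le> 4/3" using N_diff_square_le_4_3 by (simp add: x_def)
  have "1 \<le> (1 + Sp t) / a" using assms by simp
  then have "9/2 * x ^ 2 * 1 \<le> 9/2 * x ^ 2 * ((1 + Sp t) / a)" by (intro mult_left_mono) auto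
  also have "\<dots> = 9 / (2 * a) * x ^ 2 * (1 + Sp t)" by simp
  finally have main: "9/2 * x ^ 2 \<le> 9 / (2 * a) * x ^ 2 * (1 + Sp t)" by simp
  have "\<bar>r\<bar> * \<bar>r\<bar> \<le> 1 * \<bar>r\<bar>" using r by (intro mult_right_mono) auto
  then have "r ^ 2 \<le> \<bar>r\<bar>" by (simp add: power2_eq_square)
  then have "3 * Sm t ^ 2 * r ^ 2 \<le> 3 * 1 * \<bar>r\<bar>"
    using Sm by (intro mult_mono) auto
  moreover have "\<bar>3/4 * sqrt 3 * x ^ 2 * Sm t * r\<bar> \<le> 3/4 * 2 * (4/3) * 1 * \<bar>r\<bar>"
    unfolding abs_mult using Sm x
    by (intro mult_mono) (auto simp: real_sqrt_less_iff order_less_imp_le[OF real_less_lsqrt])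
  then have "3/4 * sqrt 3 * x ^ 2 * Sm t * r \<le> 2 * \<bar>r\<bar>" by simp
  moreover have "3 * Sm t ^ 2 * (1 - r ^ 2) = 3 * Sm t ^ 2 - 3 * Sm t ^ 2 * r ^ 2"
    by (simp add: algebra_simps)
  moreover have "3 * Sm t ^ 2 + 9/4 * x ^ 2 = 3 * (1 - Sp t ^ 2)"
    using constraint[of t] by (simp add: x_def)
  ultimately show ?thesis
    using main unfolding H'_def x_def[symmetric] r_def[symmetric] by linarith
qed

lemma H_abs_le:
  assumes "0 < a" shows "\<bar>H a t\<bar> \<le> 1 + 6 / a"
proof -
  have "\<bar>sqrt 3 / 2 * (Sm t * ratio t)\<bar> \<le> 1 * (1 * 1)"
    unfolding abs_mult using Sm_abs_le_1[of t] ratio_abs_le_1[of t]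
    by (intro mult_mono) (auto simp: real_sqrt_le_iff order_less_imp_le[OF real_less_lsqrt])
  moreover have "0 \<le> 3 / a * (1 + Sp t)"
    using assms Sp_abs_less_1[of t] by (simp add: abs_less_iff)
  moreover have "3 / a * (1 + Sp t) \<le> 3 / a * 2"
    using assms Sp_abs_less_1[of t] by (intro mult_left_mono) (auto simp: abs_less_iff)
  ultimately show ?thesis by (simp add: H_def abs_le_iff)
qed

lemma Sp_gets_close_to_minus_1:
  assumes a: "0 < a" shows "\<exists>t. 1 + Sp t < a"
proof (rule ccontr)
  assume "\<nexists>t. 1 + Sp t < a"
  then have away: "a \<le> 1 + Sp t" for t by (simp add: not_less)
  define b where "b = 1 - Sp 0"
  have b: "0 < b" using Sp_abs_less_1[of 0] by (simp add: b_def abs_less_iff)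
  then have ab: "0 < a * b" using a by simp
  have gap: "a * b \<le> 1 - Sp t ^ 2" if "0 \<le> t" for t
  proof -
    have "b \<le> 1 - Sp t" using Sp_antimono[OF that] by (simp add: b_def)
    with away[of t] a b have "a * b \<le> (1 + Sp t) * (1 - Sp t)"
      by (intro mult_mono) auto
    then show ?thesis by (simp add: power2_eq_square algebra_simps)
  qed
  have "filterlim (\<lambda>t. 3 * P 0 * (a\<^sup>2 * exp (4 * a * t))) at_top at_top"
    using a P_pos[of 0]
    by (auto intro!: filterlim_tendsto_pos_mult_at_top filterlim_compose[OF exp_at_top]
        filterlim_tendsto_pos_mult_at_top[OF tendsto_const] filterlim_ident)
  then have "((\<lambda>t. 1 / (3 * P 0 * (a\<^sup>2 * exp (4 * a * t)))) \<longlongrightarrow> 0) at_top"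
    using tendsto_inverse_0_at_top by (simp add: inverse_eq_divide)
  moreover have decay: "ratio t ^ 2 \<le> 1 / (3 * P 0 * (a\<^sup>2 * exp (4 * a * t)))"
    if "0 \<le> t" for t
  proof -
    have "a\<^sup>2 \<le> (1 + Sp t) ^ 2" using a away[of t] by (intro power_mono) auto
    moreover have "exp (4 * a * t) \<le> exp (4 * (1 + Sp t) * t)"
      using away[of t] that by (simp add: mult_right_mono)
    ultimately have "a\<^sup>2 * exp (4 * a * t) \<le> (1 + Sp t) ^ 2 * exp (4 * (1 + Sp t) * t)"
      by (intro mult_mono) auto
    then have "3 * P 0 * (a\<^sup>2 * exp (4 * a * t))
        \<le> 3 * P 0 * ((1 + Sp t) ^ 2 * exp (4 * (1 + Sp t) * t))"
      using P_pos[of 0] by simp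
    moreover have "0 < 3 * P 0 * (a\<^sup>2 * exp (4 * a * t))" using a P_pos[of 0] by simp
    ultimately have "1 / (3 * P 0 * ((1 + Sp t) ^ 2 * exp (4 * (1 + Sp t) * t)))
        \<le> 1 / (3 * P 0 * (a\<^sup>2 * exp (4 * a * t)))"
      by (intro frac_le) auto
    with ratio_square_decay[OF that] show ?thesis by linarith
  qed
  moreover have "\<forall>\<^sub>F t in at_top. ratio t ^ 2 \<le> 1 / (3 * P 0 * (a\<^sup>2 * exp (4 * a * t)))"
    using eventually_ge_at_top[of "0::real"] by eventually_elim (rule decay)
  ultimately have "((\<lambda>t. \<bar>ratio t\<bar>) \<longlongrightarrow> 0) at_top"
    by (intro tendsto_rabs_zero) (rule tendsto_zero_if_power2_le)
  moreover have "0 < 2/5 * (a * b)" using ab by simp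
  ultimately have "\<forall>\<^sub>F t in at_top. \<bar>ratio t\<bar> < 2/5 * (a * b)"
    by (rule order_tendstoD(2))
  then have "\<forall>\<^sub>F t in at_top. a * b \<le> H' a t"
    using eventually_ge_at_top[of 0]
  proof eventually_elim
    case (elim t)
    then show ?case
      using H_deriv_ge[OF a away[of t]] gap[OF elim(2)] unfolding right_diff_distrib by linarith
  qed
  then have "filterlim (H a) at_top at_top"
    using DERIV_eventually_ge_imp_filterlim_at_top[OF H_deriv _ ab] by blast
  then have "\<forall>\<^sub>F t in at_top. 2 + 6 / a \<le> H a t"
    by (simp add: filterlim_at_top)
  then obtain t where "2 + 6 / a \<le> H a t"
    by (metis eventually_at_top_linorder order_refl)
  with H_abs_le[OF a, of t] show False by linarith
qed

lemma Sp_tendsto: "(Sp \<longlongrightarrow> -1) at_top"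
proof (rule decreasing_tendsto)
  show "\<forall>\<^sub>F t in at_top. -1 \<le> Sp t"
    using Sp_abs_less_1 by (simp add: abs_less_iff less_imp_le)
  fix y :: real assume "-1 < y"
  then obtain t0 where t0: "Sp t0 < y" using Sp_gets_close_to_minus_1[of "1 + y"] by auto
  have "Sp t < y" if "t0 \<le> t" for t using Sp_antimono[OF that] t0 by simp
  then show "\<forall>\<^sub>F t in at_top. Sp t < y" unfolding eventually_at_top_linorder by blast
qed

lemma one_plus_Sp_tendsto: "((\<lambda>t. 1 + Sp t) \<longlongrightarrow> 0) at_top"
  using tendsto_add[OF tendsto_const Sp_tendsto, of 1] by simp

lemma one_minus_Sp_square_le: "1 - Sp t ^ 2 \<le> 2 * (1 + Sp t)"
proof -
  have "(1 + Sp t) * (1 - Sp t) \<le> (1 + Sp t) * 2"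
    using Sp_abs_less_1[of t] by (intro mult_left_mono) (auto simp: abs_less_iff)
  then show ?thesis by (simp add: power2_eq_square algebra_simps)
qed

lemma Sm_tendsto: "(Sm \<longlongrightarrow> 0) at_top"
proof (rule tendsto_zero_if_power2_le)
  show "((\<lambda>t. 2 * (1 + Sp t)) \<longlongrightarrow> 0) at_top"
    by (rule tendsto_mult_right_zero[OF one_plus_Sp_tendsto])
  show "\<forall>\<^sub>F t in at_top. Sm t ^ 2 \<le> 2 * (1 + Sp t)"
    using Sm_square_le one_minus_Sp_square_le order_trans by (blast intro: always_eventually)
qed

lemma N_diff_tendsto: "((\<lambda>t. N2 t - N3 t) \<longlongrightarrow> 0) at_top"
proof (rule tendsto_zero_if_power2_le)
  show "((\<lambda>t. 8/3 * (1 + Sp t)) \<longlongrightarrow> 0) at_top"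
    by (rule tendsto_mult_right_zero[OF one_plus_Sp_tendsto])
  have "(N2 t - N3 t) ^ 2 \<le> 8/3 * (1 + Sp t)" for t
    using N_diff_square_le[of t] one_minus_Sp_square_le[of t] by linarith
  then show "\<forall>\<^sub>F t in at_top. (N2 t - N3 t) ^ 2 \<le> 8/3 * (1 + Sp t)"
    by (blast intro: always_eventually)
qed

end

theorem mainTheorem8:
  fixes N1 N2 N3 Sp Sm :: "real \<Rightarrow> real"
  assumes "wh_solution N1 N2 N3 Sp Sm"
    and "\<And>t. N1 t = 0"
    and "\<And>t. N2 t > 0"
    and "\<And>t. N3 t > 0"
    and "\<And>t. \<not> (N2 t = N3 t \<and> Sm t = 0)"
  shows "(Sp \<longlongrightarrow> -1) at_top \<and> (Sm \<longlongrightarrow> 0) at_top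
         \<and> ((\<lambda>t. N2 t - N3 t) \<longlongrightarrow> 0) at_top"
proof -
  have "N1 = (\<lambda>_. 0)" using assms(2) by blast
  with assms interpret wh_type_VII0 N2 N3 Sp Sm
    by unfold_locales auto
  show ?thesis using Sp_tendsto Sm_tendsto N_diff_tendsto by blast
qed

end
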